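(* Let $\mathbf{b}=(b_n)_{n\in\mathbb{N}_0}$ be a $D$-sequence with $\frac{b_{n+1}}{b_n}\to\infty$. Then $$(\mathbb{Z},\tau_{\mathbf{b}})^\wedge=\Big\langle\Big\{\tfrac{1}{b_n}+\mathbb{Z}: n\in\mathbb{N}\Big\}\Big\rangle=(\mathbb{Z},\lambda_{\mathbf{b}})^\wedge,$$ where a character $\chi$ of $\mathbb{Z}$ is identified with $\chi(1)\in\mathbb{T}$; that is, a homomorphism $\chi:\mathbb{Z}\to\mathbb{T}$ is $\tau_{\mathbf{b}}$-continuous if and only if it is $\lambda_{\mathbf{b}}$-continuous, if and only if $\chi(1)=\frac{a}{b_n}+\mathbb{Z}$ for some $a\in\mathbb{Z}$, $n\in\mathbb{N}$.
   Context: $\mathbb{T}=\mathbb{R}/\mathbb{Z}$; $\mathbb{T}_m=[-\frac{1}{4m},\frac{1}{4m}]+\mathbb{Z}$. For a topological abelian group $G$, $G^\wedge$ is the group of continuous homomorphisms $G\to\mathbb{T}$. A $D$-sequence is a sequence $\mathbf{b}=(b_n)_{n\in\mathbb{N}_0}$ of natural numbers with $b_0=1$, $b_n\mid b_{n+1}$, $b_n\neq b_{n+1}$. $\lambda_{\mathbf{b}}$ is the group topology on $\mathbb{Z}$ with neighborhood basis $\{b_n\mathbb{Z}\}_{n\in\mathbb{N}_0}$ at $0$. $\tau_{\mathbf{b}}$ is the group topology on $\mathbb{Z}$ with neighborhood basis at $0$ given by $V_{\mathbf{b},m}=\{k\in\mathbb{Z}: \frac{k}{b_n}+\mathbb{Z}\in\mathbb{T}_m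 \text{ for all } n\in\mathbb{N}\}$, $m\in\mathbb{N}$. *)

theory Defs
  imports "HOL-Analysis.Analysis"
begin

text \<open>The circle group T = R/Z, realised as the set of cosets x + Z.\<close>
definition coset :: "real \<Rightarrow> real set" where
  "coset x = {x + of_int k | k. True}"

definition Tcirc :: "real set set" where
  "Tcirc = range coset"

definition tadd :: "real set \<Rightarrow> real set \<Rightarrow> real set" where
  "tadd A B = {a + b | a b. a \<in> A \<and> b \<in> B}"

definition T_top :: "real set topology" where
  "T_top = topology (\<lambda>U. U \<subseteq> Tcirc \<and> open {x. coset x \<in> U})"

definition is_hom_ZT :: "(int \<Rightarrow> real set) \<Rightarrow> bool" where
  "is_hom_ZT chi \<longleftrightarrow> (\<forall>k. chi k \<in> Tcirc) \<and> (\<forall>k l. chi (k + l) = tadd (chi k) (chi l))"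

definition group_top_basis :: "int set set \<Rightarrow> int topology" where
  "group_top_basis B = topology (\<lambda>U. \<forall>x\<in>U. \<exists>V\<in>B. (\<lambda>v. x + v) ` V \<subseteq> U)"

definition D_sequence :: "(nat \<Rightarrow> nat) \<Rightarrow> bool" where
  "D_sequence b \<longleftrightarrow> b 0 = 1 \<and> (\<forall>n. 0 < b n) \<and>
     (\<forall>n. b n dvd b (Suc n)) \<and> (\<forall>n. b n \<noteq> b (Suc n))"

definition lambda_top :: "(nat \<Rightarrow> nat) \<Rightarrow> int topology" where
  "lambda_top b = group_top_basis (range (\<lambda>n. {int (b n) * k | k. True}))"

definition T_m :: "nat \<Rightarrow> real set set" where
  "T_m m = {coset x | x. \<bar>x\<bar> \<le> 1 / (4 * real m)}"

definition V_b :: "(nat \<Rightarrow> nat) \<Rightarrow> nat \<Rightarrow> int set" where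
  "V_b b m = {k. \<forall>n\<ge>1. coset (real_of_int k / real (b n)) \<in> T_m m}"

definition tau_top :: "(nat \<Rightarrow> nat) \<Rightarrow> int topology" where
  "tau_top b = group_top_basis {V_b b m | m. m \<ge> 1}"

end

theory Submission
  imports Defs
begin

(*
  A homomorphism chi : Z -> T = R/Z is k |-> k x + Z, where chi 1 = x + Z.  For any group
  topology on Z given by a neighbourhood basis B at 0, such a character is continuous iff
  for every e > 0 some V in B has v x within e of an integer for all v in V
  (continuous_character_iff).  So both parts of the theorem are statements about the real x:
  continuity for lambda_b and for tau_b are each equivalent to x being a b-adic fraction
  a / b_n (b_fraction).

  For lambda_b this is easy: if all integer multiples of y = b_n x stay within 1/4 of Z,
  then y is an integer (multiples_near_int_imp_Ints).  For tau_b the hard direction uses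
  b_(n+1)/b_n -> infinity: writing d_i for the rounding error of b_i x, the sums
  sum_i c_i b_i with |c_i| <= M_i ~ b_(i+1) / (8 m b_i) lie in V_(b,m), hence the signed sums
  sum_i M_i |d_i| stay within 1/4 of Z and therefore below 1/4; but if x is not a
  b-adic fraction then infinitely many terms M_i |d_i| are bounded below (round_err_escapes),
  a contradiction.  The converse directions are direct estimates.
*)

lemma coset_eq_iff: "coset a = coset b \<longleftrightarrow> (\<exists>j::int. a = b + of_int j)"
proof
  assume "coset a = coset b"
  moreover have "a \<in> coset a"
    unfolding coset_def by (auto intro: exI[of _ 0])
  ultimately show "\<exists>j::int. a = b + of_int j"
    unfolding coset_def by auto
next
  assume "\<exists>j::int. a = b + of_int j"
  then obtain j where j: "a = b + of_int j" by blast
  have "a + of_int k = b + of_int (j + k)" "b + of_int k = a + of_int (k - j)" for k :: int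
    using j by simp_all
  then show "coset a = coset b"
    unfolding coset_def by (metis (no_types, opaque_lifting))
qed

lemma coset_add_int [simp]: "coset (a + of_int j) = coset a"
  using coset_eq_iff by blast

lemma tadd_coset: "tadd (coset a) (coset b) = coset (a + b)"
proof -
  have "a + of_int k + (b + of_int l) = a + b + of_int (k + l)" for k l :: int
    by simp
  moreover have "a + b + of_int k = (a + of_int k) + (b + of_int 0)" for k :: int
    by simp
  ultimately show ?thesis
    unfolding tadd_def coset_def by blast
qed

lemma hom_ZT_coset_mult:
  assumes hom: "is_hom_ZT chi" and x: "chi 1 = coset x"
  shows "chi k = coset (of_int k * x)"
proof -
  have T: "\<And>k. chi k \<in> Tcirc" and A: "\<And>k l. chi (k + l) = tadd (chi k) (chi l)"
    using hom unfolding is_hom_ZT_def by auto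
  obtain c where c: "chi 0 = coset c"
    using T[of 0] unfolding Tcirc_def by auto
  have "coset c = coset (c + c)"
    using A[of 0 0] c tadd_coset by simp
  then obtain j where "c = c + c + of_int j"
    using coset_eq_iff by blast
  then have "c = 0 + of_int (- j)" by simp
  then have chi0: "chi 0 = coset 0"
    using c coset_add_int by metis
  show ?thesis
  proof (induction k rule: int_induct[where k = 0])
    case base
    then show ?case using chi0 by simp
  next
    case (step1 i)
    have "chi (i + 1) = tadd (chi i) (chi 1)" by (rule A)
    also have "\<dots> = coset (of_int i * x + x)"
      using step1 x tadd_coset by simp
    finally show ?case by (simp add: algebra_simps)
  next
    case (step2 i)
    obtain d where d: "chi (i - 1) = coset d"
      using T[of "i - 1"] unfolding Tcirc_def by auto
    have "chi i = tadd (chi (i - 1)) (chi 1)"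
      using A[of "i - 1" 1] by simp
    then have "coset (of_int i * x) = coset (d + x)"
      using step2 d x tadd_coset by simp
    then obtain j where "of_int i * x = d + x + of_int j"
      using coset_eq_iff by blast
    then have "d = of_int (i - 1) * x + of_int (- j)"
      by (simp add: algebra_simps)
    then show ?case
      using d coset_add_int[of "of_int (i - 1) * x" "- j"] by simp
  qed
qed

definition near_int :: "real \<Rightarrow> real \<Rightarrow> bool" where
  "near_int e z \<longleftrightarrow> (\<exists>p::int. \<bar>z - of_int p\<bar> < e)"

lemma near_int_add_int [simp]: "near_int e (z + of_int j) \<longleftrightarrow> near_int e z"
proof
  assume "near_int e (z + of_int j)"
  then obtain p :: int where "\<bar>z + of_int j - of_int p\<bar> < e"
    unfolding near_int_def by blast
  then have "\<bar>z - of_int (p - j)\<bar> < e" by (simp add: algebra_simps)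
  then show "near_int e z" unfolding near_int_def by blast
next
  assume "near_int e z"
  then obtain p :: int where "\<bar>z - of_int p\<bar> < e"
    unfolding near_int_def by blast
  then have "\<bar>z + of_int j - of_int (p + j)\<bar> < e" by (simp add: algebra_simps)
  then show "near_int e (z + of_int j)" unfolding near_int_def by blast
qed

lemma near_int_small: "\<bar>z\<bar> < e \<Longrightarrow> near_int e z"
  unfolding near_int_def by (intro exI[of _ 0]) simp

lemma near_int_of_int: "0 < e \<Longrightarrow> near_int e (of_int j)"
  unfolding near_int_def by (intro exI[of _ j]) simp

definition round_err :: "real \<Rightarrow> real" where
  "round_err z = z - of_int (round z)"

lemma round_err_bound: "\<bar>round_err z\<bar> \<le> 1/2"
  using of_int_round_abs_le[of z] unfolding round_err_def by linarith

lemma round_err_eq_0_iff: "round_err z = 0 \<longleftrightarrow> z \<in> \<int>"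
  unfolding round_err_def by (metis Ints_cases Ints_of_int eq_iff_diff_eq_0 round_of_int)

lemma round_err_unique:
  assumes "\<bar>r\<bar> < 1/2" and "z = r + of_int j"
  shows "round_err z = r"
  using assms round_unique'[of z j] unfolding round_err_def by simp

lemma near_int_mult_round_err:
  "near_int e (of_int c * z) \<longleftrightarrow> near_int e (of_int c * round_err z)"
proof -
  have "of_int c * z = of_int c * round_err z + of_int (c * round z)"
    unfolding round_err_def by (simp add: algebra_simps)
  then show ?thesis by (metis near_int_add_int)
qed

lemma istopology_T_top: "istopology (\<lambda>U. U \<subseteq> Tcirc \<and> open {z. coset z \<in> U})"
proof -
  have "{z. coset z \<in> S \<inter> T} = {z. coset z \<in> S} \<inter> {z. coset z \<in> T}" for S T :: "real set set"
    by auto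
  moreover have "{z. coset z \<in> \<Union>K} = (\<Union>U\<in>K. {z. coset z \<in> U})" for K :: "real set set set"
    by auto
  ultimately show ?thesis
    unfolding istopology_def by (metis (no_types, lifting) Sup_le_iff le_infI1 open_Int open_UN)
qed

lemma openin_T_top: "openin T_top U \<longleftrightarrow> U \<subseteq> Tcirc \<and> open {z. coset z \<in> U}"
  unfolding T_top_def using istopology_T_top by simp

lemma topspace_T_top: "topspace T_top = Tcirc"
proof -
  have "openin T_top Tcirc"
    unfolding openin_T_top Tcirc_def by simp
  then show ?thesis
    using openin_subset openin_T_top[of "topspace T_top"] by blast
qed

lemma coset_in_ball_image: "coset z \<in> coset ` ball 0 e \<longleftrightarrow> near_int e z"
proof
  assume "coset z \<in> coset ` ball 0 e"
  then obtain y where "coset z = coset y" "\<bar>y\<bar> < e"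
    by (auto simp: dist_real_def)
  then obtain j where "z = y + of_int j"
    using coset_eq_iff by blast
  moreover have "near_int e y"
    using \<open>\<bar>y\<bar> < e\<close> by (rule near_int_small)
  ultimately show "near_int e z"
    by simp
next
  assume "near_int e z"
  then obtain p :: int where "\<bar>z - of_int p\<bar> < e"
    unfolding near_int_def by blast
  moreover have "coset z = coset (z - of_int p)"
    using coset_add_int[of "z - of_int p" p] by simp
  ultimately show "coset z \<in> coset ` ball 0 e"
    by (auto simp: dist_real_def)
qed

lemma openin_ball_image: "openin T_top (coset ` ball 0 e)"
  unfolding openin_T_top
proof
  show "coset ` ball 0 e \<subseteq> Tcirc"
    unfolding Tcirc_def by auto
  have "{z. coset z \<in> coset ` ball 0 e} = (\<Union>p::int. ball (of_int p) e)"
    unfolding coset_in_ball_image near_int_def by (auto simp: dist_real_def abs_minus_commute)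
  then show "open {z. coset z \<in> coset ` ball 0 e}"
    by auto
qed

(* A nonempty family of subsets of Z that is directed downwards; the translates of its
   members form a base of the group topology group_top_basis B. *)
definition nbhd_basis :: "int set set \<Rightarrow> bool" where
  "nbhd_basis B \<longleftrightarrow> B \<noteq> {} \<and> (\<forall>V1\<in>B. \<forall>V2\<in>B. \<exists>V\<in>B. V \<subseteq> V1 \<inter> V2)"

lemma openin_group_top_basis:
  assumes "nbhd_basis B"
  shows "openin (group_top_basis B) U \<longleftrightarrow> (\<forall>k\<in>U. \<exists>V\<in>B. (\<lambda>v. k + v) ` V \<subseteq> U)"
proof -
  have "istopology (\<lambda>U. \<forall>k\<in>U. \<exists>V\<in>B. (\<lambda>v. k + v) ` V \<subseteq> U)"
    unfolding istopology_def
  proof (intro conjI allI impI ballI)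
    fix S T k
    assume S: "\<forall>k\<in>S. \<exists>V\<in>B. (+) k ` V \<subseteq> S" and T: "\<forall>k\<in>T. \<exists>V\<in>B. (+) k ` V \<subseteq> T"
      and "k \<in> S \<inter> T"
    then obtain V1 V2 where "V1 \<in> B" "V2 \<in> B" "(+) k ` V1 \<subseteq> S" "(+) k ` V2 \<subseteq> T"
      by blast
    moreover obtain V where "V \<in> B" "V \<subseteq> V1 \<inter> V2"
      using assms calculation(1,2) unfolding nbhd_basis_def by meson
    ultimately have "(+) k ` V \<subseteq> S \<inter> T"
      by (meson image_mono inf.bounded_iff subset_trans)
    then show "\<exists>V\<in>B. (+) k ` V \<subseteq> S \<inter> T"
      using \<open>V \<in> B\<close> by blast
  next
    fix K k
    assume K: "\<forall>U\<in>K. \<forall>k\<in>U. \<exists>V\<in>B. (+) k ` V \<subseteq> U" and "k \<in> \<Union>K"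
    then obtain U where "U \<in> K" "k \<in> U"
      by blast
    then obtain V where "V \<in> B" "(+) k ` V \<subseteq> U"
      using K by blast
    have "(+) k ` V \<subseteq> \<Union>K"
      using \<open>(+) k ` V \<subseteq> U\<close> Union_upper[OF \<open>U \<in> K\<close>] by (rule order_trans)
    then show "\<exists>V\<in>B. (+) k ` V \<subseteq> \<Union>K"
      using \<open>V \<in> B\<close> by (rule bexI)
  qed
  then show ?thesis
    unfolding group_top_basis_def by simp
qed

lemma topspace_group_top_basis:
  assumes "nbhd_basis B"
  shows "topspace (group_top_basis B) = UNIV"
proof -
  have "openin (group_top_basis B) UNIV"
    using assms unfolding openin_group_top_basis[OF assms] nbhd_basis_def by blast
  then show ?thesis
    using openin_subset by blast
qed

lemma continuous_map_group_top_basis: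
  assumes "nbhd_basis B" and "\<And>k. f k \<in> Tcirc"
  shows "continuous_map (group_top_basis B) T_top f \<longleftrightarrow>
    (\<forall>U. openin T_top U \<longrightarrow> (\<forall>k. f k \<in> U \<longrightarrow> (\<exists>V\<in>B. \<forall>v\<in>V. f (k + v) \<in> U)))"
  unfolding continuous_map_def topspace_group_top_basis[OF assms(1)]
    openin_group_top_basis[OF assms(1)] topspace_T_top
  using assms(2) by (simp add: image_subset_iff Pi_iff)

lemma continuous_character_iff:
  assumes B: "nbhd_basis B"
  shows "continuous_map (group_top_basis B) T_top (\<lambda>k. coset (of_int k * x)) \<longleftrightarrow>
    (\<forall>e>0. \<exists>V\<in>B. \<forall>v\<in>V. near_int e (of_int v * x))"
  (is "?cont \<longleftrightarrow> ?small")
proof -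
  have in_T: "coset (of_int k * x) \<in> Tcirc" for k
    unfolding Tcirc_def by simp
  note cont_iff = continuous_map_group_top_basis[OF B in_T]
  show ?thesis
  proof
    assume ?cont
    show ?small
    proof (intro allI impI)
      fix e :: real
      assume "e > 0"
      then have "coset (of_int 0 * x) \<in> coset ` ball 0 e"
        by simp
      then obtain V where "V \<in> B" "\<forall>v\<in>V. coset (of_int (0 + v) * x) \<in> coset ` ball 0 e"
        using \<open>?cont\<close>[unfolded cont_iff, rule_format, OF openin_ball_image] by blast
      then show "\<exists>V\<in>B. \<forall>v\<in>V. near_int e (of_int v * x)"
        unfolding coset_in_ball_image by auto
    qed
  next
    assume small: ?small
    show ?cont
      unfolding cont_iff
    proof (intro allI impI)
      fix U k
      assume "openin T_top U" and "coset (of_int k * x) \<in> U"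
      then have "open {z. coset z \<in> U}" and "of_int k * x \<in> {z. coset z \<in> U}"
        unfolding openin_T_top by auto
      then obtain e where "e > 0" and e: "ball (of_int k * x) e \<subseteq> {z. coset z \<in> U}"
        using open_contains_ball by blast
      then obtain V where "V \<in> B" and V: "\<forall>v\<in>V. near_int e (of_int v * x)"
        using small by blast
      have "coset (of_int (k + v) * x) \<in> U" if "v \<in> V" for v
      proof -
        have "near_int e (of_int v * x)"
          using V that by blast
        then obtain p :: int where p: "\<bar>of_int v * x - of_int p\<bar> < e"
          unfolding near_int_def by blast
        then have "of_int k * x + (of_int v * x - of_int p) \<in> ball (of_int k * x) e"
          by (simp add: dist_real_def)
        then have "of_int k * x + (of_int v * x - of_int p) \<in> {z. coset z \<in> U}"
          using e by blast
        moreover have "of_int (k + v) * x = (of_int k * x + (of_int v * x - of_int p)) + of_int p"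
          by (simp add: algebra_simps)
        then have "coset (of_int (k + v) * x) = coset (of_int k * x + (of_int v * x - of_int p))"
          by (simp only: coset_add_int)
        ultimately show ?thesis
          by simp
      qed
      then show "\<exists>V\<in>B. \<forall>v\<in>V. coset (of_int (k + v) * x) \<in> U"
        using \<open>V \<in> B\<close> by blast
    qed
  qed
qed

(* A walk from 0 with steps of size at most 1/2 that always stays within 1/4 of Z
   cannot jump to another integer, so it stays within 1/4 of 0. *)
lemma walk_near_zero:
  fixes v :: "nat \<Rightarrow> real"
  assumes "v 0 = 0" and "\<And>j. \<bar>v (Suc j) - v j\<bar> \<le> 1/2" and "\<And>j. near_int (1/4) (v j)"
  shows "\<bar>v j\<bar> < 1/4"
proof (induction j)
  case 0
  then show ?case using assms(1) by simp
next
  case (Suc j)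
  obtain p :: int where p: "\<bar>v (Suc j) - of_int p\<bar> < 1/4"
    using assms(3) unfolding near_int_def by blast
  have "\<bar>v (Suc j)\<bar> < 3/4"
    using Suc assms(2)[of j] by linarith
  then have "\<bar>of_int p\<bar> < (1::real)"
    using p by linarith
  then have "p = 0" by linarith
  then show ?case using p by simp
qed

(* If t d is near Z for all t <= M, then M |d| < 1/4 (walk along the multiples of d). *)
lemma small_multiples:
  assumes "\<bar>d\<bar> \<le> 1/2" and "\<And>t. t \<le> M \<Longrightarrow> near_int (1/4) (real t * d)"
  shows "real M * \<bar>d\<bar> < 1/4"
proof -
  have "\<bar>real (min j M) * d\<bar> < 1/4" for j
  proof (rule walk_near_zero[where v = "\<lambda>j. real (min j M) * d"])
    show "\<bar>real (min (Suc j) M) * d - real (min j M) * d\<bar> \<le> 1/2" for j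
      using assms(1) by (cases "j < M") (simp_all add: algebra_simps)
    show "near_int (1/4) (real (min j M) * d)" for j
      using assms(2) by simp
  qed simp
  from this[of M] show ?thesis by (simp add: abs_mult)
qed

lemma multiples_near_int_imp_Ints:
  assumes "\<And>t::nat. near_int (1/4) (real t * y)"
  shows "y \<in> \<int>"
proof -
  have near: "near_int (1/4) (real t * round_err y)" for t
    using assms[of t] near_int_mult_round_err[of _ "int t" y] by simp
  have "round_err y = 0"
  proof (rule ccontr)
    assume "round_err y \<noteq> 0"
    then obtain M :: nat where "1 / \<bar>round_err y\<bar> < real M"
      using reals_Archimedean2 by blast
    then have "1 < real M * \<bar>round_err y\<bar>"
      using \<open>round_err y \<noteq> 0\<close> by (simp add: field_simps)
    moreover have "real M * \<bar>round_err y\<bar> < 1/4"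
      using small_multiples[OF round_err_bound near] by blast
    ultimately show False by simp
  qed
  then show ?thesis by (simp add: round_err_eq_0_iff)
qed

lemma D_pos: "D_sequence b \<Longrightarrow> 0 < b n"
  by (simp add: D_sequence_def)

lemma D_quotient:
  assumes "D_sequence b"
  shows "b (Suc n) = (b (Suc n) div b n) * b n" and "2 \<le> b (Suc n) div b n"
proof -
  show eq: "b (Suc n) = (b (Suc n) div b n) * b n"
    using assms unfolding D_sequence_def by simp
  have "b (Suc n) div b n \<noteq> 0"
    using eq D_pos[OF assms, of "Suc n"] by (metis mult_zero_left less_irrefl)
  moreover have "b (Suc n) div b n \<noteq> 1"
    using eq assms unfolding D_sequence_def by (metis mult_1)
  ultimately show "2 \<le> b (Suc n) div b n" by simp
qed

lemma D_dvd:
  assumes "D_sequence b" and "n \<le> p"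
  shows "b n dvd b p"
  using assms(2)
proof (induction p rule: dec_induct)
  case (step p)
  then show ?case
    using assms(1) dvd_trans unfolding D_sequence_def by blast
qed simp

(* Since the b_i at least double, the sum of b_1, ..., b_p is at most 2 b_p. *)
lemma D_sum_le:
  assumes "D_sequence b"
  shows "(\<Sum>i<p. real (b (Suc i))) \<le> 2 * real (b p)"
proof (induction p)
  case (Suc p)
  have "2 * b p \<le> b (Suc p)"
    using D_quotient[OF assms, of p] by (metis mult_le_mono1)
  then have "2 * real (b p) \<le> real (b (Suc p))"
    by (metis of_nat_le_iff of_nat_mult of_nat_numeral)
  then show ?case using Suc by simp
qed simp

lemma multiples_antimono:
  assumes "D_sequence b" and "n \<le> n'"
  shows "{int (b n') * k | k. True} \<subseteq> {int (b n) * k | k. True}"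
proof
  fix z assume "z \<in> {int (b n') * k | k. True}"
  then obtain k where k: "z = int (b n') * k" by blast
  obtain t where "b n' = b n * t"
    using D_dvd[OF assms] by (meson dvdE)
  then have "z = int (b n) * (int t * k)"
    using k by simp
  then show "z \<in> {int (b n) * k | k. True}" by blast
qed

lemma nbhd_basis_lambda:
  assumes "D_sequence b"
  shows "nbhd_basis (range (\<lambda>n. {int (b n) * k | k. True}))"
  unfolding nbhd_basis_def
proof (intro conjI ballI)
  fix V1 V2
  assume "V1 \<in> range (\<lambda>n. {int (b n) * k | k. True})" "V2 \<in> range (\<lambda>n. {int (b n) * k | k. True})"
  then obtain n1 n2 where "V1 = {int (b n1) * k | k. True}" "V2 = {int (b n2) * k | k. True}"
    by blast
  then have "{int (b (max n1 n2)) * k | k. True} \<subseteq> V1 \<inter> V2"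
    using multiples_antimono[OF assms, of n1 "max n1 n2"] multiples_antimono[OF assms, of n2 "max n1 n2"]
    by auto
  then show "\<exists>V\<in>range (\<lambda>n. {int (b n) * k | k. True}). V \<subseteq> V1 \<inter> V2"
    by blast
qed simp

lemma coset_in_T_m: "coset z \<in> T_m m \<longleftrightarrow> (\<exists>p::int. \<bar>z - of_int p\<bar> \<le> 1 / (4 * real m))"
proof
  assume "coset z \<in> T_m m"
  then obtain y where "coset z = coset y" "\<bar>y\<bar> \<le> 1 / (4 * real m)"
    unfolding T_m_def by auto
  moreover obtain j where "z = y + of_int j"
    using \<open>coset z = coset y\<close> coset_eq_iff by blast
  ultimately have "\<bar>z - of_int j\<bar> \<le> 1 / (4 * real m)"
    by simp
  then show "\<exists>p::int. \<bar>z - of_int p\<bar> \<le> 1 / (4 * real m)" ..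
next
  assume "\<exists>p::int. \<bar>z - of_int p\<bar> \<le> 1 / (4 * real m)"
  then obtain p :: int where "\<bar>z - of_int p\<bar> \<le> 1 / (4 * real m)"
    by blast
  moreover have "coset z = coset (z - of_int p)"
    using coset_add_int[of "z - of_int p" p] by simp
  ultimately show "coset z \<in> T_m m"
    unfolding T_m_def by blast
qed

lemma V_b_antimono:
  assumes "1 \<le> m" and "m \<le> m'"
  shows "V_b b m' \<subseteq> V_b b m"
proof -
  have "1 / (4 * real m') \<le> 1 / (4 * real m)"
    using assms by (intro divide_left_mono) auto
  then show ?thesis
    unfolding V_b_def coset_in_T_m by (fastforce intro: order_trans)
qed

lemma nbhd_basis_tau: "nbhd_basis {V_b b m | m. 1 \<le> m}"
  unfolding nbhd_basis_def
proof (intro conjI ballI)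
  fix V1 V2
  assume "V1 \<in> {V_b b m | m. 1 \<le> m}" "V2 \<in> {V_b b m | m. 1 \<le> m}"
  then obtain m1 m2 where "V1 = V_b b m1" "V2 = V_b b m2" "1 \<le> m1" "1 \<le> m2"
    by blast
  then have "V_b b (max m1 m2) \<subseteq> V1 \<inter> V2"
    using V_b_antimono[of m1 "max m1 m2" b] V_b_antimono[of m2 "max m1 m2" b] by auto
  moreover have "V_b b (max m1 m2) \<in> {V_b b m | m. 1 \<le> m}"
    using \<open>1 \<le> m1\<close> by auto
  ultimately show "\<exists>V\<in>{V_b b m | m. 1 \<le> m}. V \<subseteq> V1 \<inter> V2"
    by blast
qed blast

definition b_fraction :: "(nat \<Rightarrow> nat) \<Rightarrow> real \<Rightarrow> bool" where
  "b_fraction b x \<longleftrightarrow> (\<exists>a::int. \<exists>n\<ge>1. x = of_int a / real (b n))"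

(* The restriction n >= 1 is harmless, since a / b_0 = a b_1 / b_1. *)
lemma b_fractionI:
  assumes D: "D_sequence b" and x: "x = of_int a / real (b n)"
  shows "b_fraction b x"
proof (cases "n = 0")
  case True
  then have "x = of_int (a * int (b 1)) / real (b 1)"
    using x D_pos[OF D, of 1] D unfolding D_sequence_def by simp
  then show ?thesis
    unfolding b_fraction_def by (intro exI[of _ "a * int (b 1)"] exI[of _ 1]) simp
next
  case False
  then show ?thesis
    using x unfolding b_fraction_def by (intro exI[of _ a] exI[of _ n]) simp
qed

lemma b_fraction_iff_coset:
  assumes D: "D_sequence b"
  shows "(\<exists>a::int. \<exists>n::nat. n \<ge> 1 \<and> coset x = coset (of_int a / real (b n))) \<longleftrightarrow> b_fraction b x"
proof
  assume "\<exists>a::int. \<exists>n::nat. n \<ge> 1 \<and> coset x = coset (of_int a / real (b n))"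
  then obtain a n j where "x = of_int a / real (b n) + of_int j"
    using coset_eq_iff by blast
  then have "x = of_int (a + j * int (b n)) / real (b n)"
    using D_pos[OF D, of n] by (simp add: field_simps)
  then show "b_fraction b x"
    by (rule b_fractionI[OF D])
next
  assume "b_fraction b x"
  then obtain a n where "n \<ge> 1" "x = of_int a / real (b n)"
    unfolding b_fraction_def by blast
  then show "\<exists>a::int. \<exists>n::nat. n \<ge> 1 \<and> coset x = coset (of_int a / real (b n))"
    by (intro exI[of _ a] exI[of _ n]) simp
qed

lemma lambda_continuous_iff:
  assumes D: "D_sequence b"
  shows "continuous_map (lambda_top b) T_top (\<lambda>k. coset (of_int k * x)) \<longleftrightarrow> b_fraction b x"
proof -
  have iff: "continuous_map (lambda_top b) T_top (\<lambda>k. coset (of_int k * x)) \<longleftrightarrow>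
      (\<forall>e>0. \<exists>n. \<forall>t. near_int e (of_int (int (b n) * t) * x))"
  proof -
    have basis_form: "(\<exists>V\<in>range (\<lambda>n. {int (b n) * k | k. True}). \<forall>v\<in>V. P v) \<longleftrightarrow>
        (\<exists>n. \<forall>t. P (int (b n) * t))" for P :: "int \<Rightarrow> bool"
      by auto
    show ?thesis
      unfolding lambda_top_def continuous_character_iff[OF nbhd_basis_lambda[OF D]] basis_form ..
  qed
  show ?thesis
    unfolding iff
  proof
    assume "\<forall>e>0. \<exists>n. \<forall>t. near_int e (of_int (int (b n) * t) * x)"
    then obtain n where n: "\<forall>t. near_int (1/4) (of_int (int (b n) * t) * x)"
      by (meson zero_less_divide_1_iff zero_less_numeral)
    have "near_int (1/4) (real t * (real (b n) * x))" for t :: nat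
      using n[rule_format, of "int t"] by (simp add: mult_ac)
    then have "real (b n) * x \<in> \<int>"
      by (rule multiples_near_int_imp_Ints)
    then obtain a where "real (b n) * x = of_int a"
      by (auto elim: Ints_cases)
    then have "x = of_int a / real (b n)"
      using D_pos[OF D, of n] by (simp add: field_simps)
    then show "b_fraction b x"
      by (rule b_fractionI[OF D])
  next
    assume "b_fraction b x"
    then obtain a n where "x = of_int a / real (b n)"
      unfolding b_fraction_def by blast
    then have "of_int (int (b n) * t) * x = of_int (t * a)" for t
      using D_pos[OF D, of n] by simp
    then show "\<forall>e>0. \<exists>n. \<forall>t. near_int e (of_int (int (b n) * t) * x)"
      using near_int_of_int by metis
  qed
qed

(* Sums of blocks c_i b_i with 8 m |c_i| b_i <= b_(i+1) lie in V_(b,m): dividing by b_n,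
   the blocks with i >= n give an integer and the ones with i < n have total size at
   most 2 b_n / (8 m). *)
lemma V_b_block_sum:
  assumes D: "D_sequence b" and m: "1 \<le> m"
    and c: "\<And>i. 8 * real m * \<bar>of_int (c i)\<bar> * real (b i) \<le> real (b (Suc i))"
  shows "(\<Sum>i<L. c i * int (b i)) \<in> V_b b m"
  unfolding V_b_def coset_in_T_m
proof (intro CollectI allI impI)
  fix n :: nat
  define head where "head = (\<Sum>i\<in>{..<L} \<inter> {..<n}. c i * int (b i))"
  define tail where "tail = (\<Sum>i\<in>{..<L} - {..<n}. c i * int (b i))"
  have split: "(\<Sum>i<L. c i * int (b i)) = head + tail"
    unfolding head_def tail_def by (rule sum.Int_Diff) simp
  have "int (b n) dvd tail"
    unfolding tail_def
  proof (rule dvd_sum)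
    fix i assume "i \<in> {..<L} - {..<n}"
    then have "b n dvd b i"
      using D_dvd[OF D] by simp
    then show "int (b n) dvd c i * int (b i)"
      by (simp add: dvd_mult)
  qed
  then obtain s where tail: "tail = int (b n) * s" ..
  have "\<bar>of_int head\<bar> \<le> (\<Sum>i\<in>{..<L} \<inter> {..<n}. \<bar>of_int (c i)\<bar> * real (b i))"
    unfolding head_def of_int_sum by (rule order_trans[OF sum_abs]) (simp add: abs_mult)
  also have "\<dots> \<le> (\<Sum>i<n. \<bar>of_int (c i)\<bar> * real (b i))"
    by (rule sum_mono2) auto
  also have "\<dots> \<le> (\<Sum>i<n. real (b (Suc i)) / (8 * real m))"
  proof (rule sum_mono)
    fix i
    show "\<bar>of_int (c i)\<bar> * real (b i) \<le> real (b (Suc i)) / (8 * real m)"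
      using c[of i] m by (simp add: field_simps)
  qed
  also have "\<dots> = (\<Sum>i<n. real (b (Suc i))) / (8 * real m)"
    by (simp add: sum_divide_distrib)
  also have "\<dots> \<le> 2 * real (b n) / (8 * real m)"
    by (rule divide_right_mono[OF D_sum_le[OF D]]) simp
  finally have "\<bar>of_int head / real (b n)\<bar> \<le> 1 / (4 * real m)"
    using D_pos[OF D, of n] by (simp add: field_simps)
  moreover have "of_int (\<Sum>i<L. c i * int (b i)) / real (b n) - of_int s = of_int head / real (b n)"
    unfolding split tail using D_pos[OF D, of n] by (simp add: field_simps)
  ultimately have "\<bar>of_int (\<Sum>i<L. c i * int (b i)) / real (b n) - of_int s\<bar> \<le> 1 / (4 * real m)"
    by (simp only:)
  then show "\<exists>p::int. \<bar>of_int (\<Sum>i<L. c i * int (b i)) / real (b n) - of_int p\<bar> \<le> 1 / (4 * real m)" ..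
qed

(* The largest admissible coefficient at position i in V_b_block_sum. *)
definition block_size :: "(nat \<Rightarrow> nat) \<Rightarrow> nat \<Rightarrow> nat \<Rightarrow> nat" where
  "block_size b m i = (b (Suc i) div b i) div (8 * m)"

lemma block_size_fits:
  assumes D: "D_sequence b"
  shows "8 * real m * real (block_size b m i) * real (b i) \<le> real (b (Suc i))"
proof -
  have "8 * m * block_size b m i * b i \<le> (b (Suc i) div b i) * b i"
    unfolding block_size_def by (intro mult_right_mono) (simp_all add: mult.commute)
  then have "8 * m * block_size b m i * b i \<le> b (Suc i)"
    using D_quotient(1)[OF D, of i] by simp
  then have "real (8 * m * block_size b m i * b i) \<le> real (b (Suc i))"
    by (simp only: of_nat_le_iff)
  then show ?thesis
    by simp
qed

lemma block_size_large:
  assumes m: "1 \<le> m" and large: "16 * real m \<le> real (b (Suc i) div b i)"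
  shows "real (b (Suc i) div b i) / (16 * real m) \<le> real (block_size b m i)"
proof -
  define q where "q = b (Suc i) div b i"
  define Q where "Q = q div (8 * m)"
  have "q mod (8 * m) < 8 * m"
    using m by simp
  moreover have "q = 8 * m * Q + q mod (8 * m)"
    unfolding Q_def by simp
  ultimately have "q < 8 * m * Q + 8 * m"
    by linarith
  then have q_less: "real q < 8 * real m * real Q + 8 * real m"
    by (metis of_nat_add of_nat_less_iff of_nat_mult of_nat_numeral)
  have "1 \<le> real Q"
    using q_less large m unfolding q_def[symmetric] by (cases "Q = 0") auto
  then have "8 * real m * 1 \<le> 8 * real m * real Q"
    by (intro mult_left_mono) auto
  then have "real q \<le> 16 * real m * real Q"
    using q_less by linarith
  then show ?thesis
    using m unfolding block_size_def q_def[symmetric] Q_def[symmetric] by (simp add: field_simps)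
qed

lemma near_int_block_combination:
  assumes D: "D_sequence b" and m: "1 \<le> m"
    and near: "\<And>k. k \<in> V_b b m \<Longrightarrow> near_int (1/4) (of_int k * x)"
    and c: "\<And>i. \<bar>c i\<bar> \<le> int (block_size b m i)"
  shows "near_int (1/4) (\<Sum>i<L. of_int (c i) * round_err (real (b i) * x))"
proof -
  have "8 * real m * \<bar>of_int (c i)\<bar> * real (b i) \<le> real (b (Suc i))" for i
  proof -
    have "\<bar>of_int (c i)\<bar> \<le> real (block_size b m i)"
      using c[of i] by (metis of_int_abs of_int_le_iff of_int_of_nat_eq)
    then have "8 * real m * \<bar>of_int (c i)\<bar> * real (b i) \<le> 8 * real m * real (block_size b m i) * real (b i)"
      by (intro mult_right_mono mult_left_mono) auto
    then show ?thesis
      using block_size_fits[OF D, of m i] by linarith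
  qed
  then have "near_int (1/4) (of_int (\<Sum>i<L. c i * int (b i)) * x)"
    using near V_b_block_sum[OF D m] by blast
  moreover have "of_int (\<Sum>i<L. c i * int (b i)) * x = (\<Sum>i<L. of_int (c i) * (real (b i) * x))"
    by (simp add: sum_distrib_right mult.assoc)
  also have "\<dots> = (\<Sum>i<L. of_int (c i) * round_err (real (b i) * x) + of_int (c i * round (real (b i) * x)))"
    by (rule sum.cong) (simp_all add: round_err_def algebra_simps)
  also have "\<dots> = (\<Sum>i<L. of_int (c i) * round_err (real (b i) * x)) +
      of_int (\<Sum>i<L. c i * round (real (b i) * x))"
    by (simp add: sum.distrib)
  ultimately show ?thesis
    by (metis near_int_add_int)
qed

(* Along y_(i+1) = q_i y_i with q_i >= 2, the rounding error of a non-integer cannot stay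
   small: otherwise it would be multiplied by q_i at every step and grow beyond 1/2. *)
lemma round_err_escapes:
  fixes y :: "nat \<Rightarrow> real" and q :: "nat \<Rightarrow> nat"
  assumes y_Suc: "\<And>i. y (Suc i) = real (q i) * y i" and q: "\<And>i. 2 \<le> q i"
    and not_int: "y I \<notin> \<int>"
  shows "\<exists>i\<ge>I. 1/2 \<le> real (q i) * \<bar>round_err (y i)\<bar>"
proof (rule ccontr)
  assume "\<not> ?thesis"
  then have small: "real (q i) * \<bar>round_err (y i)\<bar> < 1/2" if "I \<le> i" for i
    using that by force
  have step: "\<bar>round_err (y (Suc i))\<bar> = real (q i) * \<bar>round_err (y i)\<bar>" if "I \<le> i" for i
  proof -
    have "round_err (y (Suc i)) = real (q i) * round_err (y i)"
    proof (rule round_err_unique)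
      show "\<bar>real (q i) * round_err (y i)\<bar> < 1/2"
        using small[OF that] by (simp add: abs_mult)
      show "y (Suc i) = real (q i) * round_err (y i) + of_int (int (q i) * round (y i))"
        unfolding y_Suc round_err_def by (simp add: algebra_simps)
    qed
    then show ?thesis by (simp add: abs_mult)
  qed
  have grow: "2 ^ j * \<bar>round_err (y I)\<bar> \<le> \<bar>round_err (y (I + j))\<bar>" for j
  proof (induction j)
    case (Suc j)
    have "2 * \<bar>round_err (y (I + j))\<bar> \<le> real (q (I + j)) * \<bar>round_err (y (I + j))\<bar>"
      using q[of "I + j"] by (intro mult_right_mono) auto
    then show ?case
      using Suc step[of "I + j"] by simp
  qed simp
  have pos: "0 < \<bar>round_err (y I)\<bar>"
    using not_int round_err_eq_0_iff by auto
  obtain j :: nat where "1 / \<bar>round_err (y I)\<bar> < real j"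
    using reals_Archimedean2 by blast
  then have "1 / \<bar>round_err (y I)\<bar> < 2 ^ j"
    using of_nat_less_two_power[of j, where ?'a = real] by linarith
  then have "1 < 2 ^ j * \<bar>round_err (y I)\<bar>"
    using pos by (simp add: field_simps)
  then show False
    using grow[of j] round_err_bound[of "y (I + j)"] by linarith
qed

lemma block_errors_tendsto_zero:
  assumes D: "D_sequence b" and m: "1 \<le> m"
    and near: "\<And>k. k \<in> V_b b m \<Longrightarrow> near_int (1/4) (of_int k * x)"
  shows "(\<lambda>i. real (block_size b m i) * \<bar>round_err (real (b i) * x)\<bar>) \<longlonglongrightarrow> 0"
proof -
  define d where "d i = round_err (real (b i) * x)" for i
  define M where "M i = block_size b m i" for i
  define t where "t i = real (M i) * \<bar>d i\<bar>" for i
  note combination = near_int_block_combination[OF D m near, folded d_def M_def]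
  (* A single block: the multiples t d_i, t <= M_i, stay near Z, so M_i |d_i| < 1/4. *)
  have block_small: "t i < 1/4" for i
    unfolding t_def
  proof (rule small_multiples[OF round_err_bound[of "real (b i) * x", folded d_def]])
    fix k assume "k \<le> M i"
    then have "near_int (1/4) (\<Sum>j<Suc i. of_int (if j = i then int k else 0) * d j)"
      by (intro combination) auto
    then show "near_int (1/4) (real k * d i)"
      by simp
  qed
  have t_nonneg: "0 \<le> t i" for i
    unfolding t_def by simp
  (* With c_i = sgn(d_i) M_i all blocks push in the same direction, so the partial sums
     of the t_i walk away from 0 in steps below 1/4 while staying near Z. *)
  have partial_sums: "\<bar>\<Sum>i<j. t i\<bar> < 1/4" for j
  proof (rule walk_near_zero[where v = "\<lambda>j. \<Sum>i<j. t i"])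
    show "\<bar>(\<Sum>i<Suc j. t i) - (\<Sum>i<j. t i)\<bar> \<le> 1/2" for j
      using block_small[of j] t_nonneg[of j] by simp
    define c where "c i = (if 0 \<le> d i then int (M i) else - int (M i))" for i
    have "of_int (c i) * d i = t i" for i
      unfolding c_def t_def by (simp add: abs_if)
    moreover have "near_int (1/4) (\<Sum>i<j. of_int (c i) * d i)" for j
      by (rule combination) (auto simp: c_def)
    ultimately show "near_int (1/4) (\<Sum>i<j. t i)" for j
      by simp
  qed simp
  have "summable t"
  proof (rule summableI_nonneg_bounded[where x = "1/4"])
    show "(\<Sum>i<j. t i) \<le> 1/4" for j
      using partial_sums[of j] by linarith
  qed (rule t_nonneg)
  then show ?thesis
    unfolding t_def M_def d_def by (rule summable_LIMSEQ_zero)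
qed

(* Otherwise the rounding errors
   d_i of b_i x escape infinitely often (q_i |d_i| >= 1/2 with q_i = b_(i+1)/b_i), and for
   large i the block size is at least q_i / (16 m), so the block errors do not tend to 0. *)
lemma tau_nbhd_imp_fraction:
  assumes D: "D_sequence b"
    and lim: "filterlim (\<lambda>n. real (b (Suc n)) / real (b n)) at_top sequentially"
    and m: "1 \<le> m"
    and near: "\<And>k. k \<in> V_b b m \<Longrightarrow> near_int (1/4) (of_int k * x)"
  shows "\<exists>a n. x = of_int a / real (b n)"
proof (rule ccontr)
  assume not_fraction: "\<not> ?thesis"
  define y where "y i = real (b i) * x" for i
  define d where "d i = round_err (y i)" for i
  define q where "q i = b (Suc i) div b i" for i
  have b_Suc: "real (b (Suc i)) = real (q i) * real (b i)" for i
    unfolding q_def using D_quotient(1)[OF D, of i] by (metis of_nat_mult)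
  have y_Suc: "y (Suc i) = real (q i) * y i" for i
    unfolding y_def b_Suc by simp
  have y_not_int: "y i \<notin> \<int>" for i
  proof
    assume "y i \<in> \<int>"
    then obtain a where "real (b i) * x = of_int a"
      unfolding y_def by (auto elim: Ints_cases)
    then have "x = of_int a / real (b i)"
      using D_pos[OF D, of i] by (simp add: field_simps)
    then show False
      using not_fraction by blast
  qed
  obtain N1 where N1: "\<And>i. N1 \<le> i \<Longrightarrow> real (block_size b m i) * \<bar>d i\<bar> < 1 / (32 * real m)"
    using m order_tendstoD(2)[OF block_errors_tendsto_zero[OF D m near], of "1 / (32 * real m)"]
    unfolding eventually_sequentially d_def y_def by auto
  obtain N0 where N0: "\<And>i. N0 \<le> i \<Longrightarrow> 16 * real m \<le> real (q i)"
  proof -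
    have "\<forall>\<^sub>F n in sequentially. 16 * real m \<le> real (b (Suc n)) / real (b n)"
      using lim unfolding filterlim_at_top by blast
    moreover have "real (b (Suc n)) / real (b n) = real (q n)" for n
      unfolding b_Suc using D_pos[OF D, of n] by simp
    ultimately show ?thesis
      using that unfolding eventually_sequentially by auto
  qed
  obtain i where i: "max N0 N1 \<le> i" "1/2 \<le> real (q i) * \<bar>d i\<bar>"
    using round_err_escapes[of y q "max N0 N1", OF y_Suc D_quotient(2)[OF D, folded q_def] y_not_int]
    unfolding d_def by blast
  have "1 / (32 * real m) = (1/2) / (16 * real m)"
    by simp
  also have "\<dots> \<le> real (q i) * \<bar>d i\<bar> / (16 * real m)"
    using i(2) m by (intro divide_right_mono) auto
  also have "\<dots> = real (q i) / (16 * real m) * \<bar>d i\<bar>"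
    by simp
  also have "\<dots> \<le> real (block_size b m i) * \<bar>d i\<bar>"
    using block_size_large[of m b i, OF m N0[unfolded q_def]] i(1)
    unfolding q_def by (intro mult_right_mono) auto
  finally show False
    using N1[of i] i(1) by simp
qed

lemma tau_continuous_iff:
  assumes D: "D_sequence b"
    and lim: "filterlim (\<lambda>n. real (b (Suc n)) / real (b n)) at_top sequentially"
  shows "continuous_map (tau_top b) T_top (\<lambda>k. coset (of_int k * x)) \<longleftrightarrow> b_fraction b x"
proof -
  have basis_form: "(\<exists>V\<in>{V_b b m | m. 1 \<le> m}. P V) \<longleftrightarrow> (\<exists>m\<ge>1. P (V_b b m))"
    for P :: "int set \<Rightarrow> bool"
    by blast
  have iff: "continuous_map (tau_top b) T_top (\<lambda>k. coset (of_int k * x)) \<longleftrightarrow>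
      (\<forall>e>0. \<exists>m\<ge>1. \<forall>v\<in>V_b b m. near_int e (of_int v * x))"
    unfolding tau_top_def continuous_character_iff[OF nbhd_basis_tau] basis_form ..
  show ?thesis
    unfolding iff
  proof
    assume "\<forall>e>0. \<exists>m\<ge>1. \<forall>v\<in>V_b b m. near_int e (of_int v * x)"
    then obtain m where "1 \<le> m" "\<forall>v\<in>V_b b m. near_int (1/4) (of_int v * x)"
      by (meson zero_less_divide_1_iff zero_less_numeral)
    then obtain a n where "x = of_int a / real (b n)"
      using tau_nbhd_imp_fraction[OF D lim] by blast
    then show "b_fraction b x"
      by (rule b_fractionI[OF D])
  next
    assume "b_fraction b x"
    then obtain a n where n: "1 \<le> n" and x: "x = of_int a / real (b n)"
      unfolding b_fraction_def by blast
    show "\<forall>e>0. \<exists>m\<ge>1. \<forall>v\<in>V_b b m. near_int e (of_int v * x)"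
    proof (intro allI impI)
      fix e :: real
      assume "0 < e"
      obtain m :: nat where m: "\<bar>of_int a\<bar> / (4 * e) < real m"
        using reals_Archimedean2 by blast
      then have "1 \<le> m"
        using \<open>0 < e\<close> by (cases m) (auto simp: divide_less_0_iff)
      have "near_int e (of_int v * x)" if v: "v \<in> V_b b m" for v
      proof -
        obtain p :: int where p: "\<bar>of_int v / real (b n) - of_int p\<bar> \<le> 1 / (4 * real m)"
          using v n unfolding V_b_def coset_in_T_m by blast
        have "\<bar>of_int a * (of_int v / real (b n) - of_int p)\<bar> \<le> \<bar>of_int a\<bar> * (1 / (4 * real m))"
          unfolding abs_mult using p by (intro mult_left_mono) auto
        also have "\<dots> < e"
          using m \<open>0 < e\<close> \<open>1 \<le> m\<close> by (simp add: field_simps)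
        finally have "near_int e (of_int a * (of_int v / real (b n) - of_int p))"
          by (rule near_int_small)
        moreover have "of_int v * x = of_int a * (of_int v / real (b n) - of_int p) + of_int (a * p)"
          using x by (simp add: algebra_simps)
        ultimately show ?thesis
          by (simp only: near_int_add_int)
      qed
      then show "\<exists>m\<ge>1. \<forall>v\<in>V_b b m. near_int e (of_int v * x)"
        using \<open>1 \<le> m\<close> by blast
    qed
  qed
qed

theorem theorem4p4:
  fixes b :: "nat \<Rightarrow> nat" and chi :: "int \<Rightarrow> real set"
  assumes "D_sequence b"
    and "filterlim (\<lambda>n. real (b (Suc n)) / real (b n)) at_top sequentially"
    and "is_hom_ZT chi"
  shows "(continuous_map (tau_top b) T_top chi \<longleftrightarrow> continuous_map (lambda_top b) T_top chi)
       \<and> (continuous_map (lambda_top b) T_top chi \<longleftrightarrow>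
            (\<exists>a::int. \<exists>n::nat. n \<ge> 1 \<and> chi 1 = coset (real_of_int a / real (b n))))"
proof -
  obtain x where x: "chi 1 = coset x"
    using assms(3) unfolding is_hom_ZT_def Tcirc_def by blast
  have chi: "chi = (\<lambda>k. coset (of_int k * x))"
    using hom_ZT_coset_mult[OF assms(3) x] by blast
  have lambda: "continuous_map (lambda_top b) T_top chi \<longleftrightarrow> b_fraction b x"
    unfolding chi by (rule lambda_continuous_iff[OF assms(1)])
  have tau: "continuous_map (tau_top b) T_top chi \<longleftrightarrow> b_fraction b x"
    unfolding chi by (rule tau_continuous_iff[OF assms(1,2)])
  have fraction: "(\<exists>a::int. \<exists>n::nat. n \<ge> 1 \<and> chi 1 = coset (real_of_int a / real (b n))) \<longleftrightarrow>
      b_fraction b x"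
    unfolding x by (rule b_fraction_iff_coset[OF assms(1)])
  show ?thesis
    unfolding lambda tau fraction by simp
qed

end
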